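(* Let $(X,\Sigma)$ be a measurable space, $(\mathcal{E}_t)_{t\ge0}$ a process of pavings, $\mathscr{A}=\{\mathsf{A}_t(\cdot|E)\colon E\in\mathcal{E}_t,\,t\ge0\}$ a parametric family of conditional aggregation operators, $f\in\mathbf{F}$ and $\boldsymbol{\mu}=(\mu_t)_{t\ge0}$ a family of monotone measures on $\Sigma$. Then for each $t\ge0$: (a) $\boldsymbol{\mu}_{\mathscr{A}}(0_X,t)=0$ if $t>0$, and $\boldsymbol{\mu}_{\mathscr{A}}(0_X,0)=\sup\{\mu_0(E)\colon E\in\mathcal{E}_0\}$; (b) $\boldsymbol{\mu}_{\mathscr{A}}(f,0)=\sup\{\mu_0(E)\colon E\in\mathcal{E}_0\}$; (c) $\boldsymbol{\mu}_{\mathscr{A}}(f,t)=\mu_t(X)$ whenever $X\in\mathcal{E}_t$ and $t\le\mathsf{A}_t(f|X)$.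
   Context: $0_X$ denotes the zero function on $X$. $\Sigma^0=\Sigma\setminus\{\emptyset\}$. $\mathbf{F}$ denotes the set of all $\Sigma$-measurable, nonnegative, bounded functions $f\colon X\to[0,\infty)$. A monotone measure is a map $\mu\colon\Sigma\to[0,\infty]$ with $\mu(B)\le\mu(C)$ whenever $B\subseteq C$, $\mu(\emptyset)=0$ and $\mu(X)>0$. For $E\in\Sigma^0$, a conditional aggregation operator (CAO) w.r.t. $E$ is a map $\mathsf{A}(\cdot|E)\colon\mathbf{F}\to[0,\infty]$ such that (C1) $\mathsf{A}(f|E)\le\mathsf{A}(g|E)$ whenever $f(x)\le g(x)$ for all $x\in E$, and (C2) $\mathsf{A}(\mathbf{1}_{X\setminus E}|E)=0$. A process of pavings is a family $(\mathcal{E}_t)_{t\ge0}$ with $\emptyset\in\mathcal{E}_t\subseteq\Sigma$ for all $t$; $\mathcal{E}_t^0=\mathcal{E}_t\setminus\{\emptyset\}$. A parametric family of CAOs (pFCA) $\{\mathsf{A}_t(\cdot|E)\colon E\in\mathcal{E}_t,\,t\ge0\}$ consists of CAOs $\mathsf{A}_t(\cdot|E)$ w.r.t. $E$ for each $t$ and $E\in\mathcal{E}_t^0$, with the convention $\mathsf{A}_t(\cdot|\emptyset)=\infty$. The generalized level measure is $\boldsymbol{\mu}_{\mathscr{A}}(f,t)=\sup\{\mu_t(E)\colon \mathsf{A}_t(f|E)\ge t,\ E\in\mathcal{E}_t\}$ for $t\ge0$. *)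

theory Defs
  imports "HOL-Analysis.Analysis"
begin

text \<open>The measurable space (X, Sigma) is given by a measure M: X = space M, Sigma = sets M.\<close>

definition bddF :: "'a measure \<Rightarrow> ('a \<Rightarrow> real) set" where
  "bddF M = {f. f \<in> borel_measurable M \<and> (\<forall>x\<in>space M. 0 \<le> f x) \<and> bounded (f ` space M)}"

definition monotone_measure :: "'a measure \<Rightarrow> ('a set \<Rightarrow> ennreal) \<Rightarrow> bool" where
  "monotone_measure M \<mu> \<longleftrightarrow>
     (\<forall>B\<in>sets M. \<forall>C\<in>sets M. B \<subseteq> C \<longrightarrow> \<mu> B \<le> \<mu> C) \<and> \<mu> {} = 0 \<and> \<mu> (space M) > 0"

definition CAO :: "'a measure \<Rightarrow> 'a set \<Rightarrow> (('a \<Rightarrow> real) \<Rightarrow> ennreal) \<Rightarrow> bool" where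
  "CAO M E A \<longleftrightarrow>
     (\<forall>f\<in>bddF M. \<forall>g\<in>bddF M. (\<forall>x\<in>E. f x \<le> g x) \<longrightarrow> A f \<le> A g) \<and>
     A (indicator (space M - E)) = 0"

definition paving_process :: "'a measure \<Rightarrow> (real \<Rightarrow> 'a set set) \<Rightarrow> bool" where
  "paving_process M \<E> \<longleftrightarrow> (\<forall>t\<ge>0. {} \<in> \<E> t \<and> \<E> t \<subseteq> sets M)"

definition pFCA :: "'a measure \<Rightarrow> (real \<Rightarrow> 'a set set)
    \<Rightarrow> (real \<Rightarrow> 'a set \<Rightarrow> ('a \<Rightarrow> real) \<Rightarrow> ennreal) \<Rightarrow> bool" where
  "pFCA M \<E> A \<longleftrightarrow>
     (\<forall>t\<ge>0. (\<forall>E\<in>\<E> t - {{}}. CAO M E (A t E)) \<and> (\<forall>f. A t {} f = \<infinity>))"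

definition gen_level_measure :: "(real \<Rightarrow> 'a set set)
    \<Rightarrow> (real \<Rightarrow> 'a set \<Rightarrow> ('a \<Rightarrow> real) \<Rightarrow> ennreal)
    \<Rightarrow> (real \<Rightarrow> 'a set \<Rightarrow> ennreal) \<Rightarrow> ('a \<Rightarrow> real) \<Rightarrow> real \<Rightarrow> ennreal" where
  "gen_level_measure \<E> A \<mu> f t = Sup {\<mu> t E | E. E \<in> \<E> t \<and> A t E f \<ge> ennreal t}"

end

theory Submission
  imports Defs
begin

lemma zero_in_bddF: "(\<lambda>_. 0) \<in> bddF M"
  unfolding bddF_def by (auto intro: bounded_subset[of "{0}"])

lemma indicator_compl_in_bddF:
  assumes "E \<in> sets M"
  shows "indicator (space M - E) \<in> bddF M"
proof -
  have "(indicator (space M - E) :: 'a \<Rightarrow> real) ` space M \<subseteq> {0, 1}"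
    by (auto simp: indicator_def)
  then have "bounded ((indicator (space M - E) :: 'a \<Rightarrow> real) ` space M)"
    by (rule bounded_subset[rotated]) simp
  with assms show ?thesis
    unfolding bddF_def by (auto intro: borel_measurable_indicator)
qed

lemma CAO_zero_fun:
  assumes "CAO M E A" and "E \<in> sets M"
  shows "A (\<lambda>_. 0) = 0"
proof -
  from assms(1) have mono: "\<forall>f\<in>bddF M. \<forall>g\<in>bddF M. (\<forall>x\<in>E. f x \<le> g x) \<longrightarrow> A f \<le> A g"
    and vanish: "A (indicator (space M - E)) = 0"
    unfolding CAO_def by auto
  have "A (\<lambda>_. 0) \<le> A (indicator (space M - E))"
    using mono zero_in_bddF[of M] indicator_compl_in_bddF[OF assms(2)] by simp
  with vanish show ?thesis by simp
qed

lemma gen_level_measure_at_0: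
  "gen_level_measure \<E> A \<mu> f 0 = Sup {\<mu> 0 E | E. E \<in> \<E> 0}"
  unfolding gen_level_measure_def by simp

lemma gen_level_measure_zero_fun:
  assumes "paving_process M \<E>" and "pFCA M \<E> A"
    and "monotone_measure M (\<mu> t)" and "t > 0"
  shows "gen_level_measure \<E> A \<mu> (\<lambda>_. 0) t = 0"
proof -
  have "\<mu> t E = 0" if "E \<in> \<E> t" and "ennreal t \<le> A t E (\<lambda>_. 0)" for E
  proof (cases "E = {}")
    case True
    with assms(3) show ?thesis unfolding monotone_measure_def by simp
  next
    case False
    from assms(1,4) have "\<E> t \<subseteq> sets M"
      unfolding paving_process_def by simp
    with \<open>E \<in> \<E> t\<close> have "E \<in> sets M" by blast
    from assms(2,4) False \<open>E \<in> \<E> t\<close> have "CAO M E (A t E)"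
      unfolding pFCA_def by simp
    then have "A t E (\<lambda>_. 0) = 0"
      using \<open>E \<in> sets M\<close> by (rule CAO_zero_fun)
    with \<open>ennreal t \<le> A t E (\<lambda>_. 0)\<close> \<open>t > 0\<close> show ?thesis by simp
  qed
  then show ?thesis
    unfolding gen_level_measure_def by (auto intro!: antisym Sup_least)
qed

lemma gen_level_measure_eq_space:
  assumes "\<E> t \<subseteq> sets M" and "monotone_measure M (\<mu> t)"
    and "space M \<in> \<E> t" and "ennreal t \<le> A t (space M) f"
  shows "gen_level_measure \<E> A \<mu> f t = \<mu> t (space M)"
proof -
  from assms(2) have mono: "\<forall>B\<in>sets M. \<forall>C\<in>sets M. B \<subseteq> C \<longrightarrow> \<mu> t B \<le> \<mu> t C"
    unfolding monotone_measure_def by simp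
  have le_space: "\<mu> t E \<le> \<mu> t (space M)" if "E \<in> \<E> t" for E
  proof -
    from assms(1) that have "E \<in> sets M" by blast
    then show ?thesis
      using mono sets.top[of M] sets.sets_into_space[of E M] by blast
  qed
  show ?thesis
    unfolding gen_level_measure_def
  proof (rule antisym)
    show "Sup {\<mu> t E | E. E \<in> \<E> t \<and> ennreal t \<le> A t E f} \<le> \<mu> t (space M)"
      using le_space by (auto intro!: Sup_least)
    show "\<mu> t (space M) \<le> Sup {\<mu> t E | E. E \<in> \<E> t \<and> ennreal t \<le> A t E f}"
      using assms(3,4) by (auto intro!: Sup_upper)
  qed
qed

theorem proposition3p6:
  fixes M :: "'a measure"
    and \<E> :: "real \<Rightarrow> 'a set set"
    and A :: "real \<Rightarrow> 'a set \<Rightarrow> ('a \<Rightarrow> real) \<Rightarrow> ennreal"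
    and \<mu> :: "real \<Rightarrow> 'a set \<Rightarrow> ennreal"
    and f :: "'a \<Rightarrow> real"
    and t :: real
  assumes "paving_process M \<E>"
    and "pFCA M \<E> A"
    and "f \<in> bddF M"
    and "\<forall>s\<ge>0. monotone_measure M (\<mu> s)"
    and "t \<ge> 0"
  shows "(t > 0 \<longrightarrow> gen_level_measure \<E> A \<mu> (\<lambda>_. 0) t = 0)
    \<and> gen_level_measure \<E> A \<mu> (\<lambda>_. 0) 0 = Sup {\<mu> 0 E | E. E \<in> \<E> 0}
    \<and> gen_level_measure \<E> A \<mu> f 0 = Sup {\<mu> 0 E | E. E \<in> \<E> 0}
    \<and> (space M \<in> \<E> t \<and> ennreal t \<le> A t (space M) f
        \<longrightarrow> gen_level_measure \<E> A \<mu> f t = \<mu> t (space M))"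
proof -
  have \<mu>t: "monotone_measure M (\<mu> t)"
    using assms(4,5) by simp
  have "\<E> t \<subseteq> sets M"
    using assms(1,5) unfolding paving_process_def by simp
  then show ?thesis
    using gen_level_measure_zero_fun[where \<mu> = \<mu>, OF assms(1,2) \<mu>t]
      gen_level_measure_eq_space[where \<mu> = \<mu>, OF _ \<mu>t]
    by (simp add: gen_level_measure_at_0)
qed

end
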